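(* Let $\mathcal{A}\in\mathbb{R}^{d\times\cdots\times d}$ be an order-$k$ real tensor with the same dimension $d$ in all modes. For every level $1\le\ell\le k$, \[ d^{-(k-\ell)/2}\max_{\pi\in\mathcal{P}^\ell_{[k]}}\|\mathrm{Unfold}_\pi(\mathcal{A})\|_\sigma\le\|\mathcal{A}\|_\sigma\le\min_{\pi\in\mathcal{P}^\ell_{[k]}}\|\mathrm{Unfold}_\pi(\mathcal{A})\|_\sigma . \]
   Context: For a real tensor $\mathcal{T}\in\mathbb{R}^{e_1\times\cdots\times e_m}$, $\|\mathcal{T}\|_\sigma=\sup\{\sum t_{i_1\dots i_m}x^{(1)}_{i_1}\cdots x^{(m)}_{i_m}:\ \mathbf{x}_n\in\mathbb{R}^{e_n},\ \|\mathbf{x}_n\|_2=1\}$. $\mathcal{P}^\ell_{[k]}$ is the set of partitions of $[k]=\{1,\dots,k\}$ into exactly $\ell$ nonempty blocks. Unfolding: for $\pi=\{B_1,\dots,B_\ell\}$, $\mathrm{Unfold}_\pi(\mathcal{A})$ is the order-$\ell$ tensor of dimensions $(d^{|B_1|},\dots,d^{|B_\ell|})$ whose entry at $(m_1,\dots,m_\ell)$ is $a_{i_1\dots i_k}$, where $m_j$ corresponds to $(i_r)_{r\in B_j}$ under a fixed bijection $[d]^{B_j}\to[d^{|B_j|}]$. *)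

theory Defs
  imports "HOL-Analysis.Analysis" "HOL-Library.Disjoint_Sets"
begin

text \<open>A real tensor of order m with dimensions e 0, ..., e (m-1) is a function on index
  tuples (extensional functions i with i n < e n for n < m); 0-based indexing.\<close>

definition tensor_indices :: "nat \<Rightarrow> (nat \<Rightarrow> nat) \<Rightarrow> (nat \<Rightarrow> nat) set" where
  "tensor_indices m e = PiE {0..<m} (\<lambda>n. {0..<e n})"

definition spec_norm :: "nat \<Rightarrow> (nat \<Rightarrow> nat) \<Rightarrow> ((nat \<Rightarrow> nat) \<Rightarrow> real) \<Rightarrow> real" where
  "spec_norm m e T = Sup { (\<Sum>i\<in>tensor_indices m e. T i * (\<Prod>n<m. x n (i n))) | x.
       \<forall>n<m. (\<Sum>j<e n. (x n j)\<^sup>2) = 1 }"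

definition partitions :: "nat \<Rightarrow> nat \<Rightarrow> nat set set set" where
  "partitions k l = {P. partition_on {0..<k} P \<and> card P = l}"

definition ord_block :: "nat set set \<Rightarrow> nat \<Rightarrow> nat set" where
  "ord_block P j = (THE B. B \<in> P \<and> Min B = sorted_list_of_set (Min ` P) ! j)"

definition block_of :: "nat set set \<Rightarrow> nat \<Rightarrow> nat" where
  "block_of P r = (THE j. j < card P \<and> r \<in> ord_block P j)"

text \<open>Unfolding of an order-k tensor of dimension d along the partition P.  Mode j has
  dimension d ^ card (ord_block P j); the index m_j in [0, d^|B_j|) corresponds to the tuple
  (i_r) for r in B_j via base-d digits: i_r is the digit of m_j at position
  card {s in B_j. s < r} (fixed bijection).\<close>
definition unfold_dims :: "nat \<Rightarrow> nat set set \<Rightarrow> nat \<Rightarrow> nat" where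
  "unfold_dims d P j = d ^ card (ord_block P j)"

definition unfold :: "nat \<Rightarrow> nat \<Rightarrow> nat set set \<Rightarrow> ((nat \<Rightarrow> nat) \<Rightarrow> real) \<Rightarrow> (nat \<Rightarrow> nat) \<Rightarrow> real" where
  "unfold k d P A = (\<lambda>m. A (\<lambda>r\<in>{0..<k}.
      (m (block_of P r) div d ^ card {s \<in> ord_block P (block_of P r). s < r}) mod d))"

end

theory Submission
  imports Defs
begin

text \<open>Upper bound: unit vectors \<open>x_1, ..., x_k\<close> in the modes of A assemble, block by block,
  into unit vectors \<open>\<otimes>\<^sub>r\<^sub>\<in>\<^sub>B x_r\<close> in the modes of the unfolding, on which the two
  multilinear forms agree. Lower bound: fix, in every block, the digits of all indices except the
  smallest one. This splits a rank-one tensor \<open>\<otimes>\<^sub>j y_j\<close> of the unfolding with unit \<open>y_j\<close>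
  into \<open>d^(k-l)\<close> rank-one tensors of A whose squared Frobenius norms sum to 1, and
  Cauchy-Schwarz over the pieces costs the factor \<open>d^((k-l)/2)\<close>.\<close>

lemma sum_sqrt_le_sqrt_card_mult_sum:
  fixes Q :: "'a \<Rightarrow> real"
  assumes "\<And>c. c \<in> C \<Longrightarrow> 0 \<le> Q c"
  shows "(\<Sum>c\<in>C. sqrt (Q c)) \<le> sqrt (card C * (\<Sum>c\<in>C. Q c))"
proof (rule real_le_rsqrt)
  have "(\<Sum>c\<in>C. sqrt (Q c))\<^sup>2 \<le> (\<Sum>c\<in>C. (sqrt (Q c))\<^sup>2) * card C"
    by (rule sum_squared_le_sum_of_squares)
  also have "\<dots> = card C * (\<Sum>c\<in>C. Q c)"
    using assms by simp
  finally show "(\<Sum>c\<in>C. sqrt (Q c))\<^sup>2 \<le> card C * (\<Sum>c\<in>C. Q c)" .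
qed

lemma bij_betw_if_inj_on_card_eq:
  assumes "inj_on f A" "f ` A \<subseteq> B" "card A = card B" "finite B"
  shows "bij_betw f A B"
  using assms by (metis bij_betw_imageI card_image card_subset_eq)

lemma sqrt_prod: "sqrt (\<Prod>x\<in>A. f x) = (\<Prod>x\<in>A. sqrt (f x))"
  by (induction A rule: infinite_finite_induct) (auto simp: real_sqrt_mult)

section \<open>The multilinear form of a tensor\<close>

definition multilinear_form ::
    "nat \<Rightarrow> (nat \<Rightarrow> nat) \<Rightarrow> ((nat \<Rightarrow> nat) \<Rightarrow> real) \<Rightarrow> (nat \<Rightarrow> nat \<Rightarrow> real) \<Rightarrow> real" where
  "multilinear_form m e T x = (\<Sum>i\<in>tensor_indices m e. T i * (\<Prod>n<m. x n (i n)))"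

definition unit_modes :: "nat \<Rightarrow> (nat \<Rightarrow> nat) \<Rightarrow> (nat \<Rightarrow> nat \<Rightarrow> real) \<Rightarrow> bool" where
  "unit_modes m e x \<longleftrightarrow> (\<forall>n<m. (\<Sum>j<e n. (x n j)\<^sup>2) = 1)"

lemma spec_norm_eq_Sup:
  "spec_norm m e T = Sup (multilinear_form m e T ` Collect (unit_modes m e))"
  unfolding spec_norm_def multilinear_form_def unit_modes_def by (simp add: setcompr_eq_image)

lemma finite_tensor_indices [simp]: "finite (tensor_indices m e)"
  unfolding tensor_indices_def by (auto intro!: finite_PiE)

lemma tensor_indices_less: "i \<in> tensor_indices m e \<Longrightarrow> n < m \<Longrightarrow> i n < e n"
  unfolding tensor_indices_def by (auto simp: PiE_def Pi_def)

lemma card_tensor_indices: "card (tensor_indices m e) = (\<Prod>n<m. e n)"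
  unfolding tensor_indices_def by (simp add: card_PiE atLeast0LessThan)

lemma sum_tensor_indices_prod:
  "(\<Sum>i\<in>tensor_indices m e. \<Prod>n<m. g n (i n)) = (\<Prod>n<m. \<Sum>j<e n. (g n j :: real))"
  using prod_sum_PiE[where A="{..<m}" and B="\<lambda>n. {..<e n}" and f=g] unfolding tensor_indices_def
  by (simp add: atLeast0LessThan)

lemma abs_le_1_if_sum_squares_eq_1:
  fixes x :: "nat \<Rightarrow> real"
  assumes "(\<Sum>j<e. (x j)\<^sup>2) = 1" "j < e"
  shows "\<bar>x j\<bar> \<le> 1"
proof -
  have "(x j)\<^sup>2 \<le> (\<Sum>j<e. (x j)\<^sup>2)"
    using assms(2) by (intro member_le_sum) auto
  then show ?thesis using assms(1) by (simp add: abs_square_le_1)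
qed

lemma bdd_above_multilinear_form: "bdd_above (multilinear_form m e T ` Collect (unit_modes m e))"
proof (rule bdd_aboveI2)
  fix x assume x: "x \<in> Collect (unit_modes m e)"
  have "\<bar>\<Prod>n<m. x n (i n)\<bar> \<le> 1" if "i \<in> tensor_indices m e" for i
    unfolding abs_prod using x tensor_indices_less[OF that]
    by (intro prod_le_1) (auto simp: unit_modes_def intro: abs_le_1_if_sum_squares_eq_1)
  then have "\<bar>T i * (\<Prod>n<m. x n (i n))\<bar> \<le> \<bar>T i\<bar>" if "i \<in> tensor_indices m e" for i
    using that by (simp add: abs_mult mult_left_le)
  then show "multilinear_form m e T x \<le> (\<Sum>i\<in>tensor_indices m e. \<bar>T i\<bar>)"
    unfolding multilinear_form_def by (intro sum_mono) (auto dest: abs_le_D1)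
qed

lemma multilinear_form_le_spec_norm: "unit_modes m e x \<Longrightarrow> multilinear_form m e T x \<le> spec_norm m e T"
  unfolding spec_norm_eq_Sup by (rule cSup_upper[OF _ bdd_above_multilinear_form]) simp

lemma unit_modes_exists:
  assumes "\<And>n. n < m \<Longrightarrow> 1 \<le> e n"
  shows "\<exists>x. unit_modes m e x"
proof
  have "(\<Sum>j<e n. (if j = 0 then 1 else 0 :: real)\<^sup>2) = (\<Sum>j<e n. if j = 0 then 1 else 0)" for n
    by (intro sum.cong) auto
  then show "unit_modes m e (\<lambda>_ j. if j = 0 then 1 else 0)"
    unfolding unit_modes_def using assms by (simp add: Suc_le_eq)
qed

lemma spec_norm_le:
  assumes "\<And>n. n < m \<Longrightarrow> 1 \<le> e n" and "\<And>x. unit_modes m e x \<Longrightarrow> multilinear_form m e T x \<le> b"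
  shows "spec_norm m e T \<le> b"
  unfolding spec_norm_eq_Sup using unit_modes_exists[OF assms(1)] assms(2)
  by (intro cSup_least) auto

lemma multilinear_form_flip_first_mode:
  assumes "1 \<le> m"
  shows "multilinear_form m e T (x(0 := (\<lambda>j. - x 0 j))) = - multilinear_form m e T x"
proof -
  obtain m' where m: "m = Suc m'" using assms by (cases m) auto
  have "(\<Prod>n<m. (x(0 := (\<lambda>j. - x 0 j))) n (i n)) = - (\<Prod>n<m. x n (i n))" for i
    unfolding m prod.lessThan_Suc_shift by simp
  then show ?thesis unfolding multilinear_form_def by (simp add: sum_negf)
qed

lemma spec_norm_nonneg:
  assumes "1 \<le> m" "\<And>n. n < m \<Longrightarrow> 1 \<le> e n"
  shows "0 \<le> spec_norm m e T"
proof -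
  obtain x where x: "unit_modes m e x" using unit_modes_exists[of m e, OF assms(2)] by blast
  then have "unit_modes m e (x(0 := (\<lambda>j. - x 0 j)))"
    by (auto simp: unit_modes_def)
  from multilinear_form_le_spec_norm[OF this, of T] have "- multilinear_form m e T x \<le> spec_norm m e T"
    unfolding multilinear_form_flip_first_mode[OF assms(1)] .
  with multilinear_form_le_spec_norm[OF x, of T] show ?thesis by linarith
qed

lemma multilinear_form_le_spec_norm_mult_norm:
  "multilinear_form m e T w
     \<le> spec_norm m e T * sqrt (\<Sum>i\<in>tensor_indices m e. \<Prod>n<m. (w n (i n))\<^sup>2)"
proof -
  define N where "N n = (\<Sum>j<e n. (w n j)\<^sup>2)" for n
  have N_nonneg: "0 \<le> N n" for n
    unfolding N_def by (rule sum_nonneg) simp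
  have norm_eq: "sqrt (\<Sum>i\<in>tensor_indices m e. \<Prod>n<m. (w n (i n))\<^sup>2) = (\<Prod>n<m. sqrt (N n))"
    using sum_tensor_indices_prod[where g="\<lambda>n j. (w n j)\<^sup>2"] by (simp add: N_def sqrt_prod)
  show ?thesis
  proof (cases "\<forall>n<m. 0 < N n")
    case True
    define x where "x n j = w n j / sqrt (N n)" for n j
    have "unit_modes m e x"
      unfolding unit_modes_def x_def using True N_nonneg
      by (simp add: power_divide flip: sum_divide_distrib) (auto simp: N_def)
    then have "multilinear_form m e T w / (\<Prod>n<m. sqrt (N n)) \<le> spec_norm m e T"
      using multilinear_form_le_spec_norm[of m e x T]
      by (simp add: multilinear_form_def x_def prod_dividef sum_divide_distrib)
    moreover have "0 < (\<Prod>n<m. sqrt (N n))"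
      using True by (auto intro!: prod_pos)
    ultimately show ?thesis
      by (simp add: norm_eq pos_divide_le_eq)
  next
    case False
    then obtain n where n: "n < m" "N n = 0"
      using N_nonneg by (meson not_less order_antisym)
    then have "w n j = 0" if "j < e n" for j
      using that unfolding N_def by (subst (asm) sum_nonneg_eq_0_iff) auto
    then have "(\<Prod>n<m. w n (i n)) = 0" if "i \<in> tensor_indices m e" for i
      using n(1) tensor_indices_less[OF that n(1)] by (auto intro: bexI[of _ n])
    then have form_0: "multilinear_form m e T w = 0"
      unfolding multilinear_form_def by (auto intro!: sum.neutral)
    have norm_0: "(\<Prod>n<m. sqrt (N n)) = 0"
      using n by (auto intro: bexI[of _ n])
    show ?thesis
      unfolding norm_eq form_0 norm_0 by simp
  qed
qed

section \<open>Base-\<open>d\<close> digits indexed by a finite set\<close>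

text \<open>A number \<open>t < d^|B|\<close> is identified with the tuple of its base-\<open>d\<close> digits indexed by
  \<open>B\<close>, the digit of \<open>r \<in> B\<close> sitting at the position \<open>block_rank B r\<close>; this is the
  bijection \<open>[d]^B \<rightarrow> [d^|B|]\<close> fixed in the definition of \<open>unfold\<close>.\<close>

definition block_rank :: "nat set \<Rightarrow> nat \<Rightarrow> nat" where
  "block_rank B r = card {s \<in> B. s < r}"

definition digits :: "nat \<Rightarrow> nat set \<Rightarrow> nat \<Rightarrow> nat \<Rightarrow> nat" where
  "digits d B t = (\<lambda>r\<in>B. t div d ^ block_rank B r mod d)"

definition from_digits :: "nat \<Rightarrow> nat set \<Rightarrow> (nat \<Rightarrow> nat) \<Rightarrow> nat" where
  "from_digits d B f = (\<Sum>r\<in>B. f r * d ^ block_rank B r)"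

lemma block_rank_strict_mono:
  assumes "finite B" "r \<in> B" "r' \<in> B" "r < r'"
  shows "block_rank B r < block_rank B r'"
  unfolding block_rank_def using assms by (intro psubset_card_mono) auto

lemma block_rank_less_card: "finite B \<Longrightarrow> r \<in> B \<Longrightarrow> block_rank B r < card B"
  unfolding block_rank_def by (intro psubset_card_mono) auto

lemma bij_betw_block_rank:
  assumes "finite B"
  shows "bij_betw (block_rank B) B {..<card B}"
proof -
  have "inj_on (block_rank B) B"
    by (intro inj_onI) (metis assms block_rank_strict_mono less_irrefl linorder_cases)
  then show ?thesis
    using block_rank_less_card[OF assms] by (intro bij_betw_if_inj_on_card_eq) auto
qed

lemma sum_digits_eq_mod: "(\<Sum>q<p. (t div d ^ q mod d) * d ^ q) = t mod d ^ p" for t d :: nat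
proof (induction p)
  case (Suc p)
  have "t mod d ^ Suc p = d ^ p * (t div d ^ p mod d) + t mod d ^ p"
    by (simp only: power_Suc2 mod_mult2_eq)
  then show ?case using Suc by (simp add: mult.commute)
qed simp

lemma from_digits_digits:
  assumes "finite B" "t < d ^ card B"
  shows "from_digits d B (digits d B t) = t"
proof -
  have "from_digits d B (digits d B t) = (\<Sum>r\<in>B. (t div d ^ block_rank B r mod d) * d ^ block_rank B r)"
    unfolding from_digits_def digits_def by (rule sum.cong) auto
  also have "\<dots> = (\<Sum>q<card B. (t div d ^ q mod d) * d ^ q)"
    by (rule sum.reindex_bij_betw[OF bij_betw_block_rank[OF assms(1)]])
  also have "\<dots> = t"
    using assms(2) by (simp add: sum_digits_eq_mod)
  finally show ?thesis .
qed

lemma from_digits_cong: "(\<And>r. r \<in> B \<Longrightarrow> f r = g r) \<Longrightarrow> from_digits d B f = from_digits d B g"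
  unfolding from_digits_def by (rule sum.cong) auto

lemma bij_betw_digits:
  assumes "finite B" "1 \<le> d"
  shows "bij_betw (digits d B) {..<d ^ card B} (PiE B (\<lambda>_. {..<d}))"
proof -
  have "inj_on (digits d B) {..<d ^ card B}"
    by (rule inj_on_inverseI[where g="from_digits d B"]) (simp add: from_digits_digits[OF assms(1)])
  moreover have "digits d B ` {..<d ^ card B} \<subseteq> PiE B (\<lambda>_. {..<d})"
    using assms(2) unfolding digits_def by auto
  ultimately show ?thesis
    using assms(1) by (intro bij_betw_if_inj_on_card_eq) (auto simp: card_PiE finite_PiE)
qed

lemma sum_squares_prod_digits:
  fixes x :: "nat \<Rightarrow> nat \<Rightarrow> real"
  assumes "finite B" "1 \<le> d" "\<And>r. r \<in> B \<Longrightarrow> (\<Sum>s<d. (x r s)\<^sup>2) = 1"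
  shows "(\<Sum>t<d ^ card B. (\<Prod>r\<in>B. x r (digits d B t r))\<^sup>2) = 1"
proof -
  have "(\<Sum>t<d ^ card B. (\<Prod>r\<in>B. x r (digits d B t r))\<^sup>2)
      = (\<Sum>t<d ^ card B. (\<lambda>f. \<Prod>r\<in>B. (x r (f r))\<^sup>2) (digits d B t))"
    by (simp add: prod_power_distrib)
  also have "\<dots> = (\<Sum>f\<in>PiE B (\<lambda>_. {..<d}). \<Prod>r\<in>B. (x r (f r))\<^sup>2)"
    by (rule sum.reindex_bij_betw[OF bij_betw_digits[OF assms(1,2)]])
  also have "\<dots> = (\<Prod>r\<in>B. \<Sum>s<d. (x r s)\<^sup>2)"
    by (rule prod_sum_PiE[symmetric]) (use assms(1) in auto)
  also have "\<dots> = 1"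
    using assms(3) by simp
  finally show ?thesis .
qed

locale ordered_partition =
  fixes k :: nat and P :: "nat set set"
  assumes partition: "partition_on {0..<k} P"
begin

lemma block_subset: "B \<in> P \<Longrightarrow> B \<subseteq> {0..<k}"
  using partition_onD1[OF partition] by blast

lemma finite_partition: "finite P"
  using block_subset by (intro finite_subset[of P "Pow {0..<k}"]) auto

lemma finite_block: "B \<in> P \<Longrightarrow> finite B"
  using block_subset finite_subset by blast

lemma block_eqI: "B \<in> P \<Longrightarrow> B' \<in> P \<Longrightarrow> r \<in> B \<Longrightarrow> r \<in> B' \<Longrightarrow> B = B'"
  using partition_onD2[OF partition] unfolding disjoint_def by blast

lemma Min_in_block: "B \<in> P \<Longrightarrow> Min B \<in> B"
  using finite_block partition_onD3[OF partition] by (metis Min_in)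

lemma inj_on_Min: "inj_on Min P"
  by (intro inj_onI) (metis Min_in_block block_eqI)

abbreviation sorted_minima :: "nat list" where
  "sorted_minima \<equiv> sorted_list_of_set (Min ` P)"

lemma length_sorted_minima: "length sorted_minima = card P"
  using finite_partition inj_on_Min by (simp add: card_image)

lemma ord_block_in_and_Min:
  assumes "j < card P"
  shows "ord_block P j \<in> P \<and> Min (ord_block P j) = sorted_minima ! j"
proof -
  have "sorted_minima ! j \<in> Min ` P"
    using assms finite_partition length_sorted_minima by (metis finite_imageI nth_mem set_sorted_list_of_set)
  then obtain B where B: "B \<in> P" "Min B = sorted_minima ! j"
    by (metis imageE)
  have "\<exists>!B. B \<in> P \<and> Min B = sorted_minima ! j"
    using B inj_onD[OF inj_on_Min] by (intro ex1I[of _ B]) (simp, metis)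
  then show ?thesis
    unfolding ord_block_def by (rule theI')
qed

lemma ord_block_in: "j < card P \<Longrightarrow> ord_block P j \<in> P"
  using ord_block_in_and_Min by blast

lemma bij_betw_ord_block: "bij_betw (ord_block P) {..<card P} P"
proof -
  have "inj_on (ord_block P) {..<card P}"
  proof (rule inj_onI)
    fix j j' assume "j \<in> {..<card P}" "j' \<in> {..<card P}" "ord_block P j = ord_block P j'"
    then have "sorted_minima ! j = sorted_minima ! j'"
      using ord_block_in_and_Min[of j] ord_block_in_and_Min[of j'] by simp
    then show "j = j'"
      using \<open>j \<in> {..<card P}\<close> \<open>j' \<in> {..<card P}\<close> length_sorted_minima
      by (simp add: nth_eq_iff_index_eq)
  qed
  then show ?thesis
    using ord_block_in finite_partition by (intro bij_betw_if_inj_on_card_eq) auto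
qed

lemma ord_block_index_unique:
  assumes "j < card P" "j' < card P" "r \<in> ord_block P j" "r \<in> ord_block P j'"
  shows "j = j'"
proof -
  have "ord_block P j = ord_block P j'"
    using block_eqI[OF ord_block_in[OF assms(1)] ord_block_in[OF assms(2)] assms(3,4)] .
  then show ?thesis
    using inj_onD[OF bij_betw_imp_inj_on[OF bij_betw_ord_block]] assms(1,2) by simp
qed

lemma ord_block_subset: "j < card P \<Longrightarrow> ord_block P j \<subseteq> {..<k}"
  using block_subset[OF ord_block_in] by (simp add: atLeast0LessThan)

lemma finite_ord_block: "j < card P \<Longrightarrow> finite (ord_block P j)"
  using finite_block ord_block_in by simp

lemma UN_ord_block: "(\<Union>j<card P. ord_block P j) = {..<k}"
  using bij_betw_imp_surj_on[OF bij_betw_ord_block] partition_onD1[OF partition]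
  by (simp add: atLeast0LessThan)

lemma block_of_eq:
  assumes "j < card P" "r \<in> ord_block P j"
  shows "block_of P r = j"
  unfolding block_of_def using assms
  by (intro the_equality) (simp, metis ord_block_index_unique)

lemma prod_ord_blocks: "(\<Prod>j<card P. \<Prod>r\<in>ord_block P j. f r) = (\<Prod>r<k. f r)"
proof -
  have "(\<Prod>r\<in>(\<Union>j<card P. ord_block P j). f r) = (\<Prod>j<card P. \<Prod>r\<in>ord_block P j. f r)"
    using finite_ord_block ord_block_index_unique by (intro prod.UNION_disjoint) auto
  then show ?thesis
    using UN_ord_block by simp
qed

lemma sum_card_ord_block: "(\<Sum>j<card P. card (ord_block P j)) = k"
proof -
  have "(\<Sum>j<card P. card (ord_block P j)) = card (\<Union>j<card P. ord_block P j)"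
    using finite_ord_block ord_block_index_unique by (intro card_UN_disjoint[symmetric]) auto
  then show ?thesis
    using UN_ord_block by simp
qed

end

locale tensor_unfolding = ordered_partition +
  fixes d :: nat
  assumes one_le_d: "1 \<le> d"
begin

abbreviation unfolded_indices :: "(nat \<Rightarrow> nat) set" where
  "unfolded_indices \<equiv> tensor_indices (card P) (unfold_dims d P)"

definition unfold_index :: "(nat \<Rightarrow> nat) \<Rightarrow> nat \<Rightarrow> nat" where
  "unfold_index m = (\<lambda>r\<in>{0..<k}. m (block_of P r) div d ^ block_rank (ord_block P (block_of P r)) r mod d)"

lemma unfold_eq: "unfold k d P A m = A (unfold_index m)"
  unfolding unfold_def unfold_index_def block_rank_def by simp

lemma unfold_index_ord_block:
  assumes "j < card P" "r \<in> ord_block P j"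
  shows "unfold_index m r = digits d (ord_block P j) (m j) r"
  using assms ord_block_subset[OF assms(1)] block_of_eq[OF assms]
  by (auto simp: unfold_index_def digits_def)

lemma unfolded_index_less: "m \<in> unfolded_indices \<Longrightarrow> j < card P \<Longrightarrow> m j < d ^ card (ord_block P j)"
  using tensor_indices_less[of m "card P" "unfold_dims d P" j] unfolding unfold_dims_def by simp

lemma from_digits_unfold_index:
  assumes "m \<in> unfolded_indices" "j < card P"
  shows "from_digits d (ord_block P j) (unfold_index m) = m j"
proof -
  have "from_digits d (ord_block P j) (unfold_index m) = from_digits d (ord_block P j) (digits d (ord_block P j) (m j))"
    using unfold_index_ord_block[OF assms(2)] by (intro from_digits_cong) simp
  also have "\<dots> = m j"
    using from_digits_digits[OF finite_ord_block unfolded_index_less] assms by simp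
  finally show ?thesis .
qed

lemma bij_betw_unfold_index: "bij_betw unfold_index unfolded_indices (tensor_indices k (\<lambda>_. d))"
proof (rule bij_betw_if_inj_on_card_eq)
  show "inj_on unfold_index unfolded_indices"
  proof (rule inj_onI)
    fix m m' assume m: "m \<in> unfolded_indices" and m': "m' \<in> unfolded_indices"
      and eq: "unfold_index m = unfold_index m'"
    have "m j = m' j" if "j \<in> {0..<card P}" for j
      using from_digits_unfold_index[OF m] from_digits_unfold_index[OF m'] that eq by simp
    then show "m = m'"
      using m m' unfolding tensor_indices_def by (intro PiE_ext) auto
  qed
  show "unfold_index ` unfolded_indices \<subseteq> tensor_indices k (\<lambda>_. d)"
    using one_le_d unfolding unfold_index_def tensor_indices_def by auto
  have "card unfolded_indices = (\<Prod>j<card P. d ^ card (ord_block P j))"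
    by (simp add: card_tensor_indices unfold_dims_def)
  also have "\<dots> = d ^ k"
    by (simp add: power_sum[symmetric] sum_card_ord_block)
  finally show "card unfolded_indices = card (tensor_indices k (\<lambda>_. d))"
    by (simp add: card_tensor_indices)
qed simp

section \<open>The upper bound\<close>

lemma multilinear_form_eq_unfold:
  "multilinear_form k (\<lambda>_. d) A x
     = multilinear_form (card P) (unfold_dims d P) (unfold k d P A)
         (\<lambda>j t. \<Prod>r\<in>ord_block P j. x r (digits d (ord_block P j) t r))"
proof -
  have "multilinear_form k (\<lambda>_. d) A x
      = (\<Sum>m\<in>unfolded_indices. A (unfold_index m) * (\<Prod>r<k. x r (unfold_index m r)))"
    unfolding multilinear_form_def by (rule sum.reindex_bij_betw[OF bij_betw_unfold_index, symmetric])
  also have "\<dots> = multilinear_form (card P) (unfold_dims d P) (unfold k d P A)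
                   (\<lambda>j t. \<Prod>r\<in>ord_block P j. x r (digits d (ord_block P j) t r))"
    unfolding multilinear_form_def unfold_eq prod_ord_blocks[symmetric]
    by (intro sum.cong refl arg_cong2[where f="(*)"] prod.cong) (simp_all add: unfold_index_ord_block)
  finally show ?thesis .
qed

lemma spec_norm_le_spec_norm_unfold:
  "spec_norm k (\<lambda>_. d) A \<le> spec_norm (card P) (unfold_dims d P) (unfold k d P A)"
proof (rule spec_norm_le)
  fix x assume x: "unit_modes k (\<lambda>_. d) x"
  have "unit_modes (card P) (unfold_dims d P) (\<lambda>j t. \<Prod>r\<in>ord_block P j. x r (digits d (ord_block P j) t r))"
    using x ord_block_subset finite_ord_block one_le_d
    by (auto simp: unit_modes_def unfold_dims_def intro!: sum_squares_prod_digits)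
  then show "multilinear_form k (\<lambda>_. d) A x \<le> spec_norm (card P) (unfold_dims d P) (unfold k d P A)"
    unfolding multilinear_form_eq_unfold by (rule multilinear_form_le_spec_norm)
qed (use one_le_d in simp)

section \<open>The lower bound\<close>

text \<open>The leader of a block is its smallest index, the followers are all other indices.
  \<open>block_lift y j\<close> reads the vector \<open>y_j\<close> of the unfolded mode \<open>j\<close> as a function of
  the full index \<open>i\<close>. Fixing the follower digits \<open>c\<close> turns such a family \<open>Y\<close> into vectors in
  the k modes of A: the basis vector \<open>e_{c r}\<close> in a follower mode \<open>r\<close>, and the slice of
  \<open>Y_j\<close> through \<open>c\<close> in the leader mode of block \<open>j\<close>.\<close>

definition leader :: "nat \<Rightarrow> nat" where
  "leader j = Min (ord_block P j)"

definition followers :: "nat set" where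
  "followers = {..<k} - leader ` {..<card P}"

definition follower_digits :: "(nat \<Rightarrow> nat) set" where
  "follower_digits = PiE followers (\<lambda>_. {..<d})"

definition slice_modes ::
    "(nat \<Rightarrow> (nat \<Rightarrow> nat) \<Rightarrow> real) \<Rightarrow> (nat \<Rightarrow> nat) \<Rightarrow> nat \<Rightarrow> nat \<Rightarrow> real" where
  "slice_modes Y c r s =
     (if r \<in> followers then of_bool (s = c r) else Y (block_of P r) (c(r := s)))"

definition block_lift :: "(nat \<Rightarrow> nat \<Rightarrow> real) \<Rightarrow> nat \<Rightarrow> (nat \<Rightarrow> nat) \<Rightarrow> real" where
  "block_lift y j i = y j (from_digits d (ord_block P j) i)"

lemma block_lift_power2: "(\<lambda>j i. (block_lift y j i)\<^sup>2) = block_lift (\<lambda>j t. (y j t)\<^sup>2)"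
  by (simp add: block_lift_def fun_eq_iff)

lemma leader_in_ord_block: "j < card P \<Longrightarrow> leader j \<in> ord_block P j"
  unfolding leader_def using Min_in_block ord_block_in by blast

lemma block_of_leader: "j < card P \<Longrightarrow> block_of P (leader j) = j"
  using block_of_eq leader_in_ord_block by blast

lemma leader_notin_followers: "j < card P \<Longrightarrow> leader j \<notin> followers"
  unfolding followers_def by blast

lemma in_followers_if_not_leader:
  assumes "j < card P" "r \<in> ord_block P j" "r \<noteq> leader j"
  shows "r \<in> followers"
  using assms ord_block_subset block_of_eq block_of_leader
  unfolding followers_def by fastforce

lemma card_follower_digits: "card follower_digits = d ^ (k - card P)"
proof -
  have "inj_on leader {..<card P}"
    by (metis block_of_leader inj_onI lessThan_iff)
  moreover have "leader ` {..<card P} \<subseteq> {..<k}"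
    using leader_in_ord_block ord_block_subset by blast
  ultimately have "card followers = k - card P"
    unfolding followers_def by (simp add: card_Diff_subset card_image finite_subset)
  then show ?thesis
    unfolding follower_digits_def followers_def by (simp add: card_PiE)
qed

lemma finite_follower_digits: "finite follower_digits"
  unfolding follower_digits_def followers_def by (simp add: finite_PiE)

lemma slice_modes_power2: "(slice_modes Y c r s)\<^sup>2 = slice_modes (\<lambda>j i. (Y j i)\<^sup>2) c r s"
  unfolding slice_modes_def by simp

lemma prod_slice_modes_eq_0:
  assumes "c \<in> follower_digits" "c \<noteq> restrict i followers"
  shows "(\<Prod>r<k. slice_modes Y c r (i r)) = 0"
proof -
  have "\<exists>r\<in>followers. c r \<noteq> i r"
  proof (rule ccontr)
    assume "\<not> (\<exists>r\<in>followers. c r \<noteq> i r)"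
    then have "c r = restrict i followers r" for r
      using PiE_arb[OF assms(1)[unfolded follower_digits_def], of r] by (cases "r \<in> followers") auto
    then have "c = restrict i followers" ..
    with assms(2) show False by contradiction
  qed
  then obtain r where r: "r \<in> followers" "c r \<noteq> i r" ..
  have "r \<in> {..<k}"
    using r(1) unfolding followers_def by simp
  moreover have "slice_modes Y c r (i r) = 0"
    using r by (simp add: slice_modes_def)
  ultimately show ?thesis
    by (intro prod_zero) auto
qed

lemma prod_slice_modes_restrict:
  "(\<Prod>r<k. slice_modes (block_lift y) (restrict i followers) r (i r)) = (\<Prod>j<card P. block_lift y j i)"
proof -
  let ?f = "\<lambda>r. slice_modes (block_lift y) (restrict i followers) r (i r)"
  have "?f (leader j) = block_lift y j i" if j: "j < card P" for j
  proof -
    have "from_digits d (ord_block P j) ((restrict i followers)(leader j := i (leader j)))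
        = from_digits d (ord_block P j) i"
      using in_followers_if_not_leader[OF j] by (intro from_digits_cong) auto
    then show ?thesis
      using leader_notin_followers[OF j] block_of_leader[OF j]
      unfolding slice_modes_def block_lift_def by simp
  qed
  moreover have "(\<Prod>r\<in>ord_block P j. ?f r) = ?f (leader j)" if j: "j < card P" for j
  proof -
    have "(\<Prod>r\<in>ord_block P j - {leader j}. ?f r) = 1"
      using in_followers_if_not_leader[OF j] by (intro prod.neutral) (auto simp: slice_modes_def)
    then show ?thesis
      using prod.remove[OF finite_ord_block[OF j] leader_in_ord_block[OF j], of ?f] by simp
  qed
  ultimately show ?thesis
    unfolding prod_ord_blocks[symmetric] by simp
qed

lemma sum_prod_slice_modes:
  assumes "i \<in> tensor_indices k (\<lambda>_. d)"
  shows "(\<Sum>c\<in>follower_digits. \<Prod>r<k. slice_modes (block_lift y) c r (i r)) = (\<Prod>j<card P. block_lift y j i)"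
proof -
  have "restrict i followers \<in> follower_digits"
    using assms tensor_indices_less[OF assms] unfolding follower_digits_def followers_def by auto
  then have "(\<Sum>c\<in>follower_digits. \<Prod>r<k. slice_modes (block_lift y) c r (i r))
      = (\<Prod>r<k. slice_modes (block_lift y) (restrict i followers) r (i r))
        + (\<Sum>c\<in>follower_digits - {restrict i followers}. \<Prod>r<k. slice_modes (block_lift y) c r (i r))"
    by (rule sum.remove[OF finite_follower_digits])
  also have "(\<Sum>c\<in>follower_digits - {restrict i followers}. \<Prod>r<k. slice_modes (block_lift y) c r (i r)) = 0"
    by (intro sum.neutral ballI prod_slice_modes_eq_0) auto
  finally show ?thesis
    by (simp only: prod_slice_modes_restrict add_0_right)
qed

lemma prod_block_lift_unfold_index:
  "m \<in> unfolded_indices \<Longrightarrow> (\<Prod>j<card P. block_lift y j (unfold_index m)) = (\<Prod>j<card P. y j (m j))"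
  unfolding block_lift_def by (simp add: from_digits_unfold_index)

lemma multilinear_form_unfold_eq_sum_slices:
  "multilinear_form (card P) (unfold_dims d P) (unfold k d P A) y
     = (\<Sum>c\<in>follower_digits. multilinear_form k (\<lambda>_. d) A (slice_modes (block_lift y) c))"
proof -
  have "multilinear_form (card P) (unfold_dims d P) (unfold k d P A) y
      = (\<Sum>m\<in>unfolded_indices. A (unfold_index m) * (\<Prod>j<card P. block_lift y j (unfold_index m)))"
    unfolding multilinear_form_def unfold_eq by (intro sum.cong) (simp_all add: prod_block_lift_unfold_index)
  also have "\<dots> = (\<Sum>i\<in>tensor_indices k (\<lambda>_. d). A i * (\<Prod>j<card P. block_lift y j i))"
    by (rule sum.reindex_bij_betw[OF bij_betw_unfold_index])
  also have "\<dots> = (\<Sum>i\<in>tensor_indices k (\<lambda>_. d). \<Sum>c\<in>follower_digits.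
                      A i * (\<Prod>r<k. slice_modes (block_lift y) c r (i r)))"
    by (intro sum.cong) (simp_all add: sum_prod_slice_modes flip: sum_distrib_left)
  also have "\<dots> = (\<Sum>c\<in>follower_digits. multilinear_form k (\<lambda>_. d) A (slice_modes (block_lift y) c))"
    unfolding multilinear_form_def by (rule sum.swap)
  finally show ?thesis .
qed

lemma sum_slice_norms:
  assumes "unit_modes (card P) (unfold_dims d P) y"
  shows "(\<Sum>c\<in>follower_digits. \<Sum>i\<in>tensor_indices k (\<lambda>_. d).
            \<Prod>r<k. (slice_modes (block_lift y) c r (i r))\<^sup>2) = 1"
proof -
  let ?y2 = "\<lambda>j t. (y j t)\<^sup>2"
  have "(\<Sum>c\<in>follower_digits. \<Sum>i\<in>tensor_indices k (\<lambda>_. d).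
            \<Prod>r<k. (slice_modes (block_lift y) c r (i r))\<^sup>2)
      = (\<Sum>i\<in>tensor_indices k (\<lambda>_. d). \<Sum>c\<in>follower_digits.
            \<Prod>r<k. slice_modes (block_lift ?y2) c r (i r))"
    unfolding slice_modes_power2 block_lift_power2 by (rule sum.swap)
  also have "\<dots> = (\<Sum>i\<in>tensor_indices k (\<lambda>_. d). \<Prod>j<card P. block_lift ?y2 j i)"
    by (intro sum.cong) (simp_all add: sum_prod_slice_modes)
  also have "\<dots> = (\<Sum>m\<in>unfolded_indices. \<Prod>j<card P. block_lift ?y2 j (unfold_index m))"
    by (rule sum.reindex_bij_betw[OF bij_betw_unfold_index, symmetric])
  also have "\<dots> = (\<Prod>j<card P. \<Sum>t<unfold_dims d P j. ?y2 j t)"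
    using sum_tensor_indices_prod[where g="\<lambda>j t. (y j t)\<^sup>2"]
    by (simp add: prod_block_lift_unfold_index cong: sum.cong)
  also have "\<dots> = 1"
    using assms unfolding unit_modes_def by simp
  finally show ?thesis .
qed

lemma spec_norm_unfold_le:
  assumes "1 \<le> k"
  shows "spec_norm (card P) (unfold_dims d P) (unfold k d P A)
           \<le> spec_norm k (\<lambda>_. d) A * sqrt (d ^ (k - card P))"
proof (rule spec_norm_le)
  fix y assume y: "unit_modes (card P) (unfold_dims d P) y"
  let ?S = "spec_norm k (\<lambda>_. d) A"
  let ?Q = "\<lambda>c. \<Sum>i\<in>tensor_indices k (\<lambda>_. d). \<Prod>r<k. (slice_modes (block_lift y) c r (i r))\<^sup>2"
  have "multilinear_form (card P) (unfold_dims d P) (unfold k d P A) y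
      = (\<Sum>c\<in>follower_digits. multilinear_form k (\<lambda>_. d) A (slice_modes (block_lift y) c))"
    by (rule multilinear_form_unfold_eq_sum_slices)
  also have "\<dots> \<le> (\<Sum>c\<in>follower_digits. ?S * sqrt (?Q c))"
    by (intro sum_mono multilinear_form_le_spec_norm_mult_norm)
  also have "\<dots> = ?S * (\<Sum>c\<in>follower_digits. sqrt (?Q c))"
    by (simp add: sum_distrib_left)
  also have "\<dots> \<le> ?S * sqrt (card follower_digits * (\<Sum>c\<in>follower_digits. ?Q c))"
    using spec_norm_nonneg[OF assms, of "\<lambda>_. d" A] one_le_d
    by (intro mult_left_mono sum_sqrt_le_sqrt_card_mult_sum) (auto intro!: sum_nonneg prod_nonneg)
  also have "\<dots> = ?S * sqrt (d ^ (k - card P))"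
    by (simp add: sum_slice_norms[OF y] card_follower_digits)
  finally show "multilinear_form (card P) (unfold_dims d P) (unfold k d P A) y \<le> ?S * sqrt (d ^ (k - card P))" .
qed (use one_le_d in \<open>simp add: unfold_dims_def\<close>)

end

lemma finite_partitions: "finite (partitions k l)"
proof (rule finite_subset)
  show "partitions k l \<subseteq> Pow (Pow {0..<k})"
    unfolding partitions_def using partition_onD1 by blast
qed simp

lemma partitions_nonempty:
  assumes "1 \<le> l" "l \<le> k"
  shows "partitions k l \<noteq> {}"
proof -
  define P where "P = insert {l - 1..<k} ((\<lambda>j. {j}) ` {..<l - 1})"
  have "partition_on {0..<k} P"
  proof (rule partition_onI)
    show "\<Union>P = {0..<k}"
      unfolding P_def using assms by auto
    show "disjnt p q" if "p \<in> P" "q \<in> P" "p \<noteq> q" for p q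
      using that unfolding P_def disjnt_def by auto
    show "{} \<notin> P"
      unfolding P_def using assms by auto
  qed
  moreover have "{l - 1..<k} \<notin> (\<lambda>j. {j}) ` {..<l - 1}"
  proof
    assume "{l - 1..<k} \<in> (\<lambda>j. {j}) ` {..<l - 1}"
    then obtain j where "j < l - 1" "{l - 1..<k} = {j}"
      by auto
    moreover have "l - 1 \<in> {l - 1..<k}"
      using assms by simp
    ultimately show False
      by simp
  qed
  then have "card P = l"
    unfolding P_def using assms by (simp add: card_image)
  ultimately show ?thesis
    unfolding partitions_def by blast
qed

lemma sqrt_power_eq_powr: "0 < x \<Longrightarrow> sqrt (x ^ n) = x powr (n / 2)"
  by (simp add: powr_half_sqrt[symmetric] powr_realpow[symmetric] powr_powr)

lemma spec_norm_bounds_unfold: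
  assumes "P \<in> partitions k l" and "1 \<le> d" and "1 \<le> l" and "l \<le> k"
  shows "spec_norm k (\<lambda>_. d) A \<le> spec_norm l (unfold_dims d P) (unfold k d P A)"
    and "real d powr (- (real k - real l) / 2) * spec_norm l (unfold_dims d P) (unfold k d P A)
           \<le> spec_norm k (\<lambda>_. d) A"
proof -
  interpret tensor_unfolding k P d
    using assms(1,2) by unfold_locales (simp_all add: partitions_def)
  have l: "card P = l"
    using assms(1) by (simp add: partitions_def)
  show "spec_norm k (\<lambda>_. d) A \<le> spec_norm l (unfold_dims d P) (unfold k d P A)"
    using spec_norm_le_spec_norm_unfold l by simp
  have "spec_norm l (unfold_dims d P) (unfold k d P A)
          \<le> spec_norm k (\<lambda>_. d) A * real d powr ((real k - real l) / 2)"
    using spec_norm_unfold_le[of A] assms l by (simp add: sqrt_power_eq_powr of_nat_diff)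
  then have "real d powr (- (real k - real l) / 2) * spec_norm l (unfold_dims d P) (unfold k d P A)
      \<le> real d powr (- (real k - real l) / 2) * (spec_norm k (\<lambda>_. d) A * real d powr ((real k - real l) / 2))"
    by (rule mult_left_mono) simp
  also have "\<dots> = spec_norm k (\<lambda>_. d) A"
    using assms(2) by (simp add: mult.left_commute powr_add[symmetric] add_divide_distrib[symmetric])
  finally show "real d powr (- (real k - real l) / 2) * spec_norm l (unfold_dims d P) (unfold k d P A)
           \<le> spec_norm k (\<lambda>_. d) A" .
qed

theorem corollary4p11:
  fixes k d l :: nat and A :: "(nat \<Rightarrow> nat) \<Rightarrow> real"
  assumes "1 \<le> d" and "1 \<le> l" and "l \<le> k"
  shows "real d powr (- (real k - real l) / 2) *
           Max ((\<lambda>P. spec_norm l (unfold_dims d P) (unfold k d P A)) ` partitions k l)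
         \<le> spec_norm k (\<lambda>_. d) A
       \<and> spec_norm k (\<lambda>_. d) A
         \<le> Min ((\<lambda>P. spec_norm l (unfold_dims d P) (unfold k d P A)) ` partitions k l)"
proof -
  let ?U = "\<lambda>P. spec_norm l (unfold_dims d P) (unfold k d P A)"
  have finite: "finite (?U ` partitions k l)" and nonempty: "?U ` partitions k l \<noteq> {}"
    using finite_partitions partitions_nonempty[OF assms(2,3)] by auto
  obtain P_max where "P_max \<in> partitions k l" "Max (?U ` partitions k l) = ?U P_max"
    using Max_in[OF finite nonempty] by auto
  moreover obtain P_min where "P_min \<in> partitions k l" "Min (?U ` partitions k l) = ?U P_min"
    using Min_in[OF finite nonempty] by auto
  ultimately show ?thesis
    using spec_norm_bounds_unfold[OF _ assms] by simp
qed

end
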